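(* Let $\mathcal X\subseteq\mathbb{R}^n$ be a polytope and $K:\mathcal X\to\mathbb{R}^{m\times n}$ an affine function. Then, for $\alpha\in\{1,\infty\}$, computing $\mathcal L_\alpha(K,\mathcal X)=\max_{x\in\mathcal X}\|K(x)\|_\alpha$ amounts to a mixed-integer linear program, i.e. this maximum equals the optimal value of a mixed-integer linear program.
   Context: $\|\cdot\|_\alpha$ on matrices denotes the operator norm induced by the vector $\alpha$-norm. *)

theory Defs
  imports "HOL-Analysis.Analysis"
begin

datatype normidx = Norm1 | NormInf

definition vnorm :: "normidx \<Rightarrow> real ^ 'k \<Rightarrow> real" where
  "vnorm a v = (case a of
      Norm1 \<Rightarrow> (\<Sum>i\<in>UNIV. \<bar>v $ i\<bar>)
    | NormInf \<Rightarrow> Max ((\<lambda>i. \<bar>v $ i\<bar>) ` UNIV))"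

definition opnorm :: "normidx \<Rightarrow> real ^ 'n ^ 'm \<Rightarrow> real" where
  "opnorm a A = Sup {vnorm a (A *v x) | x. vnorm a x = 1}"

definition milp_feasible ::
  "nat \<Rightarrow> nat \<Rightarrow> (nat \<Rightarrow> nat \<Rightarrow> real) \<Rightarrow> (nat \<Rightarrow> real) \<Rightarrow> nat set \<Rightarrow> (nat \<Rightarrow> real) set" where
  "milp_feasible N p A b I =
     {z. (\<forall>j\<ge>N. z j = 0) \<and> (\<forall>r<p. (\<Sum>j<N. A r j * z j) \<le> b r) \<and> (\<forall>j\<in>I. z j \<in> \<int>)}"

definition milp_obj :: "nat \<Rightarrow> (nat \<Rightarrow> real) \<Rightarrow> (nat \<Rightarrow> real) \<Rightarrow> real" where
  "milp_obj N c z = (\<Sum>j<N. c j * z j)"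

definition milp_opt_value ::
  "nat \<Rightarrow> nat \<Rightarrow> (nat \<Rightarrow> nat \<Rightarrow> real) \<Rightarrow> (nat \<Rightarrow> real) \<Rightarrow> nat set \<Rightarrow> (nat \<Rightarrow> real) \<Rightarrow> real \<Rightarrow> bool" where
  "milp_opt_value N p A b I c V \<longleftrightarrow>
     (\<exists>z\<in>milp_feasible N p A b I. milp_obj N c z = V) \<and>
     (\<forall>z\<in>milp_feasible N p A b I. milp_obj N c z \<le> V)"

end

theory Submission
  imports Defs
begin

text \<open>For \<open>\<alpha> \<in> {1, \<infinity>}\<close> the induced norm of a matrix is its largest absolute column
  (resp. row) sum, and a sum of absolute values is the largest of its signed sums. Hence
  \<open>\<parallel>K x\<parallel>\<^sub>\<alpha>\<close> is the maximum of finitely many linear functionals of \<open>K x\<close>, i.e. for affine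
  \<open>K\<close> a maximum \<open>F\<close> of finitely many affine functions \<open>c \<bullet> x + \<beta>\<close>. Maximising \<open>F\<close> over
  \<open>X = convex hull {v\<^sub>1, \<dots>, v\<^sub>r}\<close> is a MILP in \<open>x\<close>, convex weights \<open>\<lambda>\<close>, integer
  selectors \<open>\<delta>\<close> and the value \<open>t\<close>: \<open>x = \<Sum> \<lambda>\<^sub>v v\<^sub>v\<close>, \<open>\<Sum> \<delta>\<^sub>l \<ge> 1\<close> and the big-M
  constraints \<open>t \<le> c\<^sub>l \<bullet> x + \<beta>\<^sub>l + M (1 - \<delta>\<^sub>l)\<close>. A selector \<open>\<delta>\<^sub>l \<ge> 1\<close> forces
  \<open>t \<le> F x\<close>; conversely, once \<open>M\<close> bounds the gap between \<open>F\<close> and every piece on the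
  bounded set \<open>X\<close>, selecting a piece active at \<open>x\<close> lifts \<open>x\<close> to a feasible point with
  \<open>t = F x\<close>. As \<open>F\<close> is continuous and \<open>X\<close> compact, the supremum is attained.\<close>

section \<open>Induced 1- and \<infinity>-norms\<close>

definition sign_of :: "bool \<Rightarrow> real" where
  "sign_of b = (if b then 1 else -1)"

lemma Max_range_attained:
  fixes f :: "'a::finite \<Rightarrow> 'b::linorder"
  obtains j where "Max (range f) = f j"
  by (metis Max_in UNIV_not_empty finite finite_imageI image_is_empty rangeE)

lemma sum_signed_le_sum_abs:
  fixes a :: "'i::finite \<Rightarrow> real"
  shows "(\<Sum>i\<in>UNIV. sign_of (s i) * a i) \<le> (\<Sum>i\<in>UNIV. \<bar>a i\<bar>)"
  by (intro sum_mono) (auto simp: sign_of_def)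

lemma sum_abs_eq_signed:
  fixes a :: "'i::finite \<Rightarrow> real"
  shows "(\<Sum>i\<in>UNIV. \<bar>a i\<bar>) = (\<Sum>i\<in>UNIV. sign_of (a i \<ge> 0) * a i)"
  by (intro sum.cong) (auto simp: sign_of_def)

lemma Max_sum_abs_eq_Max_signed:
  fixes a :: "'j::finite \<Rightarrow> 'i::finite \<Rightarrow> real"
  shows "Max (range (\<lambda>j. \<Sum>i\<in>UNIV. \<bar>a j i\<bar>)) =
         Max (range (\<lambda>(j, s). \<Sum>i\<in>UNIV. sign_of (s i) * a j i))"
proof (rule antisym)
  obtain j where "Max (range (\<lambda>j. \<Sum>i\<in>UNIV. \<bar>a j i\<bar>)) = (\<Sum>i\<in>UNIV. \<bar>a j i\<bar>)"
    by (rule Max_range_attained)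
  also have "\<dots> = (\<lambda>(j, s). \<Sum>i\<in>UNIV. sign_of (s i) * a j i) (j, \<lambda>i. a j i \<ge> 0)"
    by (simp add: sum_abs_eq_signed)
  also have "\<dots> \<le> Max (range (\<lambda>(j, s). \<Sum>i\<in>UNIV. sign_of (s i) * a j i))"
    by (rule Max_ge) auto
  finally show "Max (range (\<lambda>j. \<Sum>i\<in>UNIV. \<bar>a j i\<bar>)) \<le> \<dots>" .
next
  show "Max (range (\<lambda>(j, s). \<Sum>i\<in>UNIV. sign_of (s i) * a j i)) \<le> Max (range (\<lambda>j. \<Sum>i\<in>UNIV. \<bar>a j i\<bar>))"
  proof (rule Max.boundedI)
    fix y assume "y \<in> range (\<lambda>(j, s). \<Sum>i\<in>UNIV. sign_of (s i) * a j i)"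
    then obtain j s where "y = (\<Sum>i\<in>UNIV. sign_of (s i) * a j i)" by auto
    also have "\<dots> \<le> (\<Sum>i\<in>UNIV. \<bar>a j i\<bar>)" by (rule sum_signed_le_sum_abs)
    also have "\<dots> \<le> Max (range (\<lambda>j. \<Sum>i\<in>UNIV. \<bar>a j i\<bar>))" by (rule Max_ge) auto
    finally show "y \<le> \<dots>" .
  qed auto
qed

lemma opnorm_Norm1_eq:
  fixes A :: "real^'n^'m"
  shows "opnorm Norm1 A = Max (range (\<lambda>j. \<Sum>i\<in>UNIV. \<bar>A$i$j\<bar>))"
proof -
  let ?C = "Max (range (\<lambda>j. \<Sum>i\<in>UNIV. \<bar>A$i$j\<bar>))"
  have bound: "vnorm Norm1 (A *v x) \<le> ?C" if x: "vnorm Norm1 x = 1" for x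
  proof -
    have "vnorm Norm1 (A *v x) = (\<Sum>i\<in>UNIV. \<bar>\<Sum>j\<in>UNIV. A$i$j * x$j\<bar>)"
      by (simp add: vnorm_def matrix_vector_mult_def)
    also have "\<dots> \<le> (\<Sum>i\<in>UNIV. \<Sum>j\<in>UNIV. \<bar>A$i$j\<bar> * \<bar>x$j\<bar>)"
      by (intro sum_mono order.trans[OF sum_abs]) (simp add: abs_mult)
    also have "\<dots> = (\<Sum>j\<in>UNIV. \<bar>x$j\<bar> * (\<Sum>i\<in>UNIV. \<bar>A$i$j\<bar>))"
      by (subst sum.swap) (simp add: sum_distrib_left mult.commute)
    also have "\<dots> \<le> (\<Sum>j\<in>UNIV. \<bar>x$j\<bar> * ?C)"
      by (intro sum_mono mult_left_mono Max_ge) auto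
    also have "\<dots> = ?C" using x by (simp add: vnorm_def sum_distrib_right[symmetric])
    finally show ?thesis .
  qed
  obtain j where j: "?C = (\<Sum>i\<in>UNIV. \<bar>A$i$j\<bar>)"
    by (rule Max_range_attained)
  have unit: "vnorm Norm1 (axis j (1::real)) = 1"
    by (simp add: vnorm_def axis_def if_distrib[where f=abs] cong: if_cong)
  have attained: "?C = vnorm Norm1 (A *v axis j 1)"
    by (simp add: vnorm_def matrix_vector_mult_def j axis_def if_distrib[where f="\<lambda>c. _ * c"] cong: if_cong)
  show ?thesis
    unfolding opnorm_def by (rule cSup_eq_maximum; use unit attained bound in blast)
qed

lemma opnorm_NormInf_eq:
  fixes A :: "real^'n^'m"
  shows "opnorm NormInf A = Max (range (\<lambda>i. \<Sum>j\<in>UNIV. \<bar>A$i$j\<bar>))"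
proof -
  let ?R = "Max (range (\<lambda>i. \<Sum>j\<in>UNIV. \<bar>A$i$j\<bar>))"
  have bound: "vnorm NormInf (A *v x) \<le> ?R" if x: "vnorm NormInf x = 1" for x
  proof -
    have "\<bar>(A *v x)$i\<bar> \<le> ?R" for i
    proof -
      have "\<bar>x$j\<bar> \<le> 1" for j
        using x Max_ge[of "range (\<lambda>i. \<bar>x$i\<bar>)" "\<bar>x$j\<bar>"] by (simp add: vnorm_def)
      then have "\<bar>(A *v x)$i\<bar> \<le> (\<Sum>j\<in>UNIV. \<bar>A$i$j\<bar>)"
        unfolding matrix_vector_mult_def vec_lambda_beta
        by (intro order.trans[OF sum_abs] sum_mono) (simp add: abs_mult mult_left_le)
      also have "\<dots> \<le> ?R" by (rule Max_ge) auto
      finally show ?thesis .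
    qed
    then show ?thesis by (simp add: vnorm_def)
  qed
  obtain i where i: "?R = (\<Sum>j\<in>UNIV. \<bar>A$i$j\<bar>)"
    by (rule Max_range_attained)
  define x :: "real^'n" where "x = (\<chi> j. sign_of (A$i$j \<ge> 0))"
  have x: "vnorm NormInf x = 1"
  proof -
    have "range (\<lambda>j. \<bar>x$j\<bar>) = {1}" by (auto simp: x_def sign_of_def)
    then show ?thesis by (simp add: vnorm_def)
  qed
  have "(A *v x)$i = (\<Sum>j\<in>UNIV. \<bar>A$i$j\<bar>)"
    by (simp add: x_def matrix_vector_mult_def sum_abs_eq_signed mult.commute)
  then have "?R = (A *v x)$i" using i by simp
  also have "\<dots> \<le> vnorm NormInf (A *v x)"
    unfolding vnorm_def normidx.case by (rule order.trans[OF abs_ge_self Max_ge]) auto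
  finally have attained: "?R = vnorm NormInf (A *v x)" using bound[OF x] by (rule antisym)
  show ?thesis
    unfolding opnorm_def by (rule cSup_eq_maximum; use x attained bound in blast)
qed

lemma opnorm_eq_Max_linear_functionals:
  obtains \<Phi> :: "(real^'n^'m \<Rightarrow> real) set"
  where "finite \<Phi>" "\<Phi> \<noteq> {}" "\<And>\<phi>. \<phi> \<in> \<Phi> \<Longrightarrow> linear \<phi>" "\<And>A. opnorm \<alpha> A = Max ((\<lambda>\<phi>. \<phi> A) ` \<Phi>)"
proof (cases \<alpha>)
  case Norm1
  let ?\<Phi> = "range (\<lambda>(j, s) (A :: real^'n^'m). \<Sum>i\<in>UNIV. sign_of (s i) * A$i$j)"
  show thesis
  proof (rule that[of ?\<Phi>])
    fix A :: "real^'n^'m"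
    show "opnorm \<alpha> A = Max ((\<lambda>\<phi>. \<phi> A) ` ?\<Phi>)"
      by (simp add: Norm1 opnorm_Norm1_eq Max_sum_abs_eq_Max_signed[of "\<lambda>j i. A$i$j"] image_image case_prod_beta')
  qed (auto intro!: linearI simp: sum.distrib algebra_simps sum_distrib_left)
next
  case NormInf
  let ?\<Phi> = "range (\<lambda>(i, s) (A :: real^'n^'m). \<Sum>j\<in>UNIV. sign_of (s j) * A$i$j)"
  show thesis
  proof (rule that[of ?\<Phi>])
    fix A :: "real^'n^'m"
    show "opnorm \<alpha> A = Max ((\<lambda>\<phi>. \<phi> A) ` ?\<Phi>)"
      by (simp add: NormInf opnorm_NormInf_eq Max_sum_abs_eq_Max_signed[of "\<lambda>i j. A$i$j"] image_image case_prod_beta')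
  qed (auto intro!: linearI simp: sum.distrib algebra_simps sum_distrib_left)
qed

section \<open>Maxima of affine functions\<close>

definition max_affine :: "('a::real_inner \<times> real) set \<Rightarrow> 'a \<Rightarrow> real" where
  "max_affine P x = Max ((\<lambda>(c, \<beta>). c \<bullet> x + \<beta>) ` P)"

lemma max_affine_ge:
  "finite P \<Longrightarrow> (c, \<beta>) \<in> P \<Longrightarrow> c \<bullet> x + \<beta> \<le> max_affine P x"
  unfolding max_affine_def by (rule Max_ge) force+

lemma max_affine_attained:
  assumes "finite P" "P \<noteq> {}"
  obtains c \<beta> where "(c, \<beta>) \<in> P" "max_affine P x = c \<bullet> x + \<beta>"
proof -
  have "max_affine P x \<in> (\<lambda>(c, \<beta>). c \<bullet> x + \<beta>) ` P"
    unfolding max_affine_def using assms by (intro Max_in) auto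
  then show thesis using that by auto
qed

lemma continuous_on_max_affine:
  assumes "finite P" "P \<noteq> {}"
  shows "continuous_on X (max_affine P)"
  using assms
proof (induction P rule: finite_ne_induct)
  case (singleton p)
  then show ?case
    by (cases p) (simp add: max_affine_def, intro continuous_intros)
next
  case (insert p P)
  have "max_affine (insert p P) = (\<lambda>x. max (fst p \<bullet> x + snd p) (max_affine P x))"
    using insert by (simp add: fun_eq_iff max_affine_def case_prod_beta')
  then show ?case
    by (simp only:) (intro continuous_intros insert.IH)
qed

lemma max_affine_gap_bounded:
  assumes "bounded X" "finite P"
  obtains M where "M \<ge> 0" "\<And>x c \<beta>. x \<in> X \<Longrightarrow> (c, \<beta>) \<in> P \<Longrightarrow> max_affine P x - (c \<bullet> x + \<beta>) \<le> M"
proof -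
  obtain B where "B > 0" and B: "\<And>x. x \<in> X \<Longrightarrow> norm x \<le> B"
    using assms(1) unfolding bounded_pos by blast
  define C where "C = (\<Sum>(c, \<beta>)\<in>P. norm c * B + \<bar>\<beta>\<bar>)"
  have piece_bound: "\<bar>c \<bullet> x + \<beta>\<bar> \<le> C" if "x \<in> X" "(c, \<beta>) \<in> P" for x c \<beta>
  proof -
    have "\<bar>c \<bullet> x\<bar> \<le> norm c * B"
      using Cauchy_Schwarz_ineq2[of c x] B[OF \<open>x \<in> X\<close>] by (meson mult_left_mono norm_ge_zero order_trans)
    then have "\<bar>c \<bullet> x + \<beta>\<bar> \<le> norm c * B + \<bar>\<beta>\<bar>" by linarith
    also have "\<dots> \<le> C"
      unfolding C_def using that(2) assms(2) \<open>B > 0\<close>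
      by (intro member_le_sum[of "(c, \<beta>)" P "\<lambda>(c, \<beta>). norm c * B + \<bar>\<beta>\<bar>", simplified]) auto
    finally show ?thesis .
  qed
  show thesis
  proof (rule that[of "2 * C"])
    show "2 * C \<ge> 0"
      unfolding C_def using \<open>B > 0\<close> by (intro mult_nonneg_nonneg sum_nonneg) auto
  next
    fix x c \<beta> assume "x \<in> X" "(c, \<beta>) \<in> P"
    moreover obtain c' \<beta>' where "(c', \<beta>') \<in> P" "max_affine P x = c' \<bullet> x + \<beta>'"
      using max_affine_attained[OF assms(2)] \<open>(c, \<beta>) \<in> P\<close> by blast
    ultimately show "max_affine P x - (c \<bullet> x + \<beta>) \<le> 2 * C"
      using piece_bound[of x c' \<beta>'] piece_bound[of x c \<beta>] by (simp add: abs_le_iff)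
  qed
qed

lemma linear_functional_eq_inner:
  fixes g :: "'a::euclidean_space \<Rightarrow> real"
  assumes "linear g"
  shows "g x = adjoint g 1 \<bullet> x"
  using adjoint_works[OF assms, of x 1] by (simp add: inner_commute)

lemma opnorm_affine_eq_max_affine:
  fixes K L :: "real^'n \<Rightarrow> real^'n^'m"
  assumes "linear L" and K: "\<And>x. x \<in> X \<Longrightarrow> K x = K0 + L x"
  obtains P where "finite P" "P \<noteq> {}" "\<And>x. x \<in> X \<Longrightarrow> opnorm \<alpha> (K x) = max_affine P x"
proof -
  obtain \<Phi> :: "(real^'n^'m \<Rightarrow> real) set" where \<Phi>: "finite \<Phi>" "\<Phi> \<noteq> {}" "\<And>\<phi>. \<phi> \<in> \<Phi> \<Longrightarrow> linear \<phi>"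
    and opnorm: "\<And>A. opnorm \<alpha> A = Max ((\<lambda>\<phi>. \<phi> A) ` \<Phi>)"
    using opnorm_eq_Max_linear_functionals[where \<alpha> = \<alpha>] by blast
  define P where "P = (\<lambda>\<phi>. (adjoint (\<phi> \<circ> L) 1, \<phi> K0)) ` \<Phi>"
  have "opnorm \<alpha> (K x) = max_affine P x" if "x \<in> X" for x
  proof -
    have "\<phi> (K x) = adjoint (\<phi> \<circ> L) 1 \<bullet> x + \<phi> K0" if "\<phi> \<in> \<Phi>" for \<phi>
    proof -
      have "linear (\<phi> \<circ> L)" using \<Phi>(3)[OF that] \<open>linear L\<close> by (rule linear_compose[rotated])
      then show ?thesis
        using K[OF \<open>x \<in> X\<close>] linear_add[OF \<Phi>(3)[OF that]] linear_functional_eq_inner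
        by (metis add.commute comp_apply)
    qed
    then show ?thesis
      unfolding opnorm max_affine_def P_def image_image by (simp cong: image_cong)
  qed
  then show thesis
    using \<Phi> by (intro that[of P]) (auto simp: P_def)
qed

section \<open>A big-M encoding over a polytope\<close>

text \<open>\<^const>\<open>milp_obj\<close> also serves as the linear form of a constraint: a row is a pair
  \<open>(a, \<beta>)\<close> standing for \<open>milp_obj N a z \<le> \<beta>\<close>.\<close>

lemma milp_obj_add [simp]: "milp_obj N (\<lambda>j. a j + b j) z = milp_obj N a z + milp_obj N b z"
  by (simp add: milp_obj_def algebra_simps sum.distrib)

lemma milp_obj_diff [simp]: "milp_obj N (\<lambda>j. a j - b j) z = milp_obj N a z - milp_obj N b z"
  by (simp add: milp_obj_def algebra_simps sum_subtractf)

lemma milp_obj_uminus [simp]: "milp_obj N (\<lambda>j. - a j) z = - milp_obj N a z"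
  by (simp add: milp_obj_def sum_negf)

lemma milp_obj_scale [simp]: "milp_obj N (\<lambda>j. r * a j) z = r * milp_obj N a z"
  by (simp add: milp_obj_def sum_distrib_left mult.assoc)

lemma milp_obj_indicator [simp]: "i < N \<Longrightarrow> milp_obj N (indicator {i}) z = z i"
  by (simp add: milp_obj_def indicator_def if_distrib[where f="\<lambda>c. c * _"] cong: if_cong)

definition var_comb :: "'t set \<Rightarrow> ('t \<Rightarrow> real) \<Rightarrow> ('t \<Rightarrow> nat) \<Rightarrow> nat \<Rightarrow> real" where
  "var_comb T f g j = (\<Sum>t\<in>T. if g t = j then f t else 0)"

lemma milp_obj_var_comb:
  assumes "finite T" "\<forall>t\<in>T. g t < N"
  shows "milp_obj N (var_comb T f g) z = (\<Sum>t\<in>T. f t * z (g t))"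
proof -
  have "milp_obj N (var_comb T f g) z = (\<Sum>t\<in>T. \<Sum>j<N. (if g t = j then f t else 0) * z j)"
    unfolding milp_obj_def var_comb_def by (simp add: sum_distrib_right sum.swap[of _ T])
  also have "\<dots> = (\<Sum>t\<in>T. f t * z (g t))"
    using assms(2) by (intro sum.cong) (simp_all add: if_distrib[where f="\<lambda>c. c * _"] cong: if_cong)
  finally show ?thesis .
qed

definition eq_rows :: "(nat \<Rightarrow> real) \<Rightarrow> real \<Rightarrow> ((nat \<Rightarrow> real) \<times> real) set" where
  "eq_rows a \<beta> = {(a, \<beta>), (\<lambda>j. - a j, - \<beta>)}"

lemma satisfies_eq_rows:
  "(\<forall>(a', \<beta>')\<in>eq_rows a \<beta>. milp_obj N a' z \<le> \<beta>') \<longleftrightarrow> milp_obj N a z = \<beta>"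
  by (auto simp: eq_rows_def)

lemma milp_feasible_rows:
  assumes "finite R"
  obtains p A b where "milp_feasible N p A b I =
    {z. (\<forall>j\<ge>N. z j = 0) \<and> (\<forall>(a, \<beta>)\<in>R. milp_obj N a z \<le> \<beta>) \<and> (\<forall>j\<in>I. z j \<in> \<int>)}"
proof -
  obtain rs where "set rs = R" using finite_list[OF assms] by blast
  then show thesis
    by (intro that[of "length rs" "\<lambda>r. fst (rs ! r)" "\<lambda>r. snd (rs ! r)"])
       (fastforce simp: milp_feasible_def milp_obj_def in_set_conv_nth)
qed

lemma Ints_sum_ge_1_imp_ex_ge_1:
  assumes "\<And>i. i \<in> T \<Longrightarrow> f i \<in> \<int>" "1 \<le> (\<Sum>i\<in>T. f i :: real)"
  obtains i where "i \<in> T" "1 \<le> f i"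
proof -
  have "\<exists>i\<in>T. 1 \<le> f i"
  proof (rule ccontr)
    assume "\<not> (\<exists>i\<in>T. 1 \<le> f i)"
    then have "f i \<le> 0" if "i \<in> T" for i
      using that assms(1)[OF that] by (auto elim!: Ints_cases)
    then have "(\<Sum>i\<in>T. f i) \<le> 0" by (rule sum_nonpos)
    with assms(2) show False by simp
  qed
  then show thesis using that by blast
qed

lemma convex_hull_list_weights:
  assumes "distinct vs" "x \<in> convex hull set vs"
  obtains w where "\<forall>v<length vs. 0 \<le> w v" "(\<Sum>v<length vs. w v) = 1"
    "(\<Sum>v<length vs. w v *\<^sub>R vs ! v) = x"
proof -
  obtain u where u: "\<forall>y\<in>set vs. 0 \<le> u y" "sum u (set vs) = 1" "(\<Sum>y\<in>set vs. u y *\<^sub>R y) = x"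
    using assms(2) convex_hull_finite[of "set vs"] by auto
  have reindex: "(\<Sum>v<length vs. f (vs ! v)) = sum f (set vs)" for f :: "_ \<Rightarrow> 'b::comm_monoid_add"
    using sum.reindex_bij_betw[OF bij_betw_nth[OF assms(1)], of "{..<length vs}" "set vs" f] by simp
  show thesis
    by (rule that[of "\<lambda>v. u (vs ! v)"]) (use u in \<open>simp_all add: reindex[of u] reindex[of "\<lambda>y. u y *\<^sub>R y"]\<close>)
qed

text \<open>Variable layout: the coordinates of \<open>x\<close> at \<open>e k < n\<close>, then the convex weights, the
  selectors \<open>\<delta>\<^sub>l\<close> and the value \<open>t\<close>. The selectors are not restricted to \<open>{0, 1}\<close>:
  integrality and \<open>\<Sum> \<delta>\<^sub>l \<ge> 1\<close> already force some \<open>\<delta>\<^sub>l \<ge> 1\<close>, which is all that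
  soundness needs.\<close>

locale max_affine_milp =
  fixes n :: nat and e :: "'n::finite \<Rightarrow> nat"
    and vs :: "(real^'n) list" and ps :: "((real^'n) \<times> real) list" and M :: real
  assumes e_bij: "bij_betw e UNIV {..<n}"
begin

definition weight_var :: "nat \<Rightarrow> nat" where "weight_var v = n + v"
definition select_var :: "nat \<Rightarrow> nat" where "select_var l = n + length vs + l"
definition value_var :: nat where "value_var = n + length vs + length ps"
definition num_vars :: nat where "num_vars = Suc value_var"
definition point :: "(nat \<Rightarrow> real) \<Rightarrow> real^'n" where "point z = (\<chi> k. z (e k))"

lemma coord_var_less: "e k < n"
  using e_bij by (auto simp: bij_betw_def)

lemma var_bounds [simp]:
  "e k < num_vars"
  "v < length vs \<Longrightarrow> weight_var v < num_vars"
  "l < length ps \<Longrightarrow> select_var l < num_vars"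
  "value_var < num_vars"
  using coord_var_less[of k] by (simp_all add: weight_var_def select_var_def value_var_def num_vars_def)

definition hull_rows :: "((nat \<Rightarrow> real) \<times> real) set" where
  "hull_rows =
     (\<Union>k. eq_rows (\<lambda>j. var_comb {..<length vs} (\<lambda>v. vs ! v $ k) weight_var j - indicator {e k} j) 0)
     \<union> (\<lambda>v. (\<lambda>j. - indicator {weight_var v} j, 0)) ` {..<length vs}
     \<union> eq_rows (var_comb {..<length vs} (\<lambda>_. 1) weight_var) 1"

definition select_row :: "(nat \<Rightarrow> real) \<times> real" where
  "select_row = (\<lambda>j. - var_comb {..<length ps} (\<lambda>_. 1) select_var j, - 1)"

definition big_M_rows :: "((nat \<Rightarrow> real) \<times> real) set" where
  "big_M_rows = (\<lambda>l. (\<lambda>j. indicator {value_var} j - var_comb UNIV (\<lambda>k. fst (ps ! l) $ k) e j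
                            + M * indicator {select_var l} j, snd (ps ! l) + M)) ` {..<length ps}"

definition milp_rows :: "((nat \<Rightarrow> real) \<times> real) set" where
  "milp_rows = hull_rows \<union> insert select_row big_M_rows"

definition solution :: "(nat \<Rightarrow> real) \<Rightarrow> bool" where
  "solution z \<longleftrightarrow> (\<forall>j\<ge>num_vars. z j = 0)
     \<and> (\<forall>(a, \<beta>)\<in>milp_rows. milp_obj num_vars a z \<le> \<beta>)
     \<and> (\<forall>j\<in>select_var ` {..<length ps}. z j \<in> \<int>)"

lemma milp_feasible_eq_solution:
  obtains p A b where "milp_feasible num_vars p A b (select_var ` {..<length ps}) = Collect solution"
proof -
  have "finite milp_rows"
    by (simp add: milp_rows_def hull_rows_def big_M_rows_def eq_rows_def)
  then obtain p A b where "milp_feasible num_vars p A b (select_var ` {..<length ps}) =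
      {z. (\<forall>j\<ge>num_vars. z j = 0)
        \<and> (\<forall>(a, \<beta>)\<in>milp_rows. milp_obj num_vars a z \<le> \<beta>)
        \<and> (\<forall>j\<in>select_var ` {..<length ps}. z j \<in> \<int>)}"
    by (rule milp_feasible_rows)
  then show thesis
    by (intro that[of p A b]) (simp only: solution_def[abs_def])
qed

lemma satisfies_hull_rows:
  "(\<forall>(a, \<beta>)\<in>hull_rows. milp_obj num_vars a z \<le> \<beta>) \<longleftrightarrow>
     point z = (\<Sum>v<length vs. z (weight_var v) *\<^sub>R vs ! v) \<and>
     (\<forall>v<length vs. 0 \<le> z (weight_var v)) \<and> (\<Sum>v<length vs. z (weight_var v)) = 1"
proof -
  have "point z = (\<Sum>v<length vs. z (weight_var v) *\<^sub>R vs ! v) \<longleftrightarrow>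
        (\<forall>k. (\<Sum>v<length vs. vs ! v $ k * z (weight_var v)) - z (e k) = 0)"
    by (auto simp: point_def vec_eq_iff mult.commute)
  then show ?thesis
    unfolding hull_rows_def ball_Un ball_UN satisfies_eq_rows
    by (auto simp: milp_obj_var_comb)
qed

lemma satisfies_select_row:
  "milp_obj num_vars (fst select_row) z \<le> snd select_row \<longleftrightarrow> 1 \<le> (\<Sum>l<length ps. z (select_var l))"
  by (simp add: select_row_def milp_obj_var_comb)

lemma satisfies_big_M_rows:
  "(\<forall>(a, \<beta>)\<in>big_M_rows. milp_obj num_vars a z \<le> \<beta>) \<longleftrightarrow>
     (\<forall>l<length ps. z value_var + M * z (select_var l) \<le> fst (ps ! l) \<bullet> point z + snd (ps ! l) + M)"
proof -
  have "milp_obj num_vars (var_comb UNIV (\<lambda>k. c $ k) e) z = c \<bullet> point z" for c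
    by (simp add: milp_obj_var_comb point_def inner_vec_def)
  then show ?thesis
    by (auto simp: big_M_rows_def algebra_simps)
qed

lemma solution_iff:
  "solution z \<longleftrightarrow> (\<forall>j\<ge>num_vars. z j = 0) \<and>
     point z = (\<Sum>v<length vs. z (weight_var v) *\<^sub>R vs ! v) \<and>
     (\<forall>v<length vs. 0 \<le> z (weight_var v)) \<and> (\<Sum>v<length vs. z (weight_var v)) = 1 \<and>
     1 \<le> (\<Sum>l<length ps. z (select_var l)) \<and>
     (\<forall>l<length ps. z value_var + M * z (select_var l) \<le> fst (ps ! l) \<bullet> point z + snd (ps ! l) + M) \<and>
     (\<forall>l<length ps. z (select_var l) \<in> \<int>)"
  unfolding solution_def milp_rows_def ball_Un ball_simps(7) satisfies_hull_rows satisfies_big_M_rows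
  using satisfies_select_row by (simp add: case_prod_beta' lessThan_def)

lemma solution_sound:
  assumes "M \<ge> 0" "solution z"
  shows "point z \<in> convex hull set vs" "z value_var \<le> max_affine (set ps) (point z)"
proof -
  note sol = assms(2)[unfolded solution_iff]
  have "(\<Sum>v<length vs. z (weight_var v) *\<^sub>R vs ! v) \<in> convex hull set vs"
    using sol by (intro convex_sum) (auto intro: hull_inc)
  then show "point z \<in> convex hull set vs"
    using sol by simp
  obtain l where l: "l < length ps" "1 \<le> z (select_var l)"
    using Ints_sum_ge_1_imp_ex_ge_1[of "{..<length ps}" "\<lambda>l. z (select_var l)"] sol by (metis lessThan_iff)
  then have "M \<le> M * z (select_var l)"
    using \<open>M \<ge> 0\<close> by (metis mult_left_mono mult.right_neutral)
  then have "z value_var \<le> fst (ps ! l) \<bullet> point z + snd (ps ! l)"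
    using sol l by force
  also have "\<dots> \<le> max_affine (set ps) (point z)"
    using l(1) by (intro max_affine_ge) auto
  finally show "z value_var \<le> max_affine (set ps) (point z)" .
qed

lemma solution_complete:
  assumes "distinct vs" "ps \<noteq> []" "x \<in> convex hull set vs"
    and gap: "\<And>c \<beta>. (c, \<beta>) \<in> set ps \<Longrightarrow> max_affine (set ps) x - (c \<bullet> x + \<beta>) \<le> M"
  obtains z where "solution z" "point z = x" "z value_var = max_affine (set ps) x"
proof -
  obtain w where w: "\<forall>v<length vs. 0 \<le> w v" "(\<Sum>v<length vs. w v) = 1"
    "(\<Sum>v<length vs. w v *\<^sub>R vs ! v) = x"
    using convex_hull_list_weights[OF assms(1,3)] by blast
  obtain l0 where l0: "l0 < length ps" "max_affine (set ps) x = fst (ps ! l0) \<bullet> x + snd (ps ! l0)"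
    using max_affine_attained[of "set ps" x] assms(2) by (metis fst_conv snd_conv in_set_conv_nth set_empty2 finite_set)
  define z where "z j =
    (if j < n then x $ inv e j
     else if j < n + length vs then w (j - n)
     else if j < value_var then (if j = select_var l0 then 1 else 0)
     else if j = value_var then max_affine (set ps) x else 0)" for j
  have z_coord: "z (e k) = x $ k" for k
    using coord_var_less[of k] e_bij by (simp add: z_def bij_betw_def)
  have z_weight: "z (weight_var v) = w v" if "v < length vs" for v
    using that by (simp add: z_def weight_var_def)
  have z_select: "z (select_var l) = (if l = l0 then 1 else 0)" if "l < length ps" for l
    using that by (simp add: z_def select_var_def value_var_def)
  have z_value: "z value_var = max_affine (set ps) x"
    by (simp add: z_def value_var_def)
  have z_point: "point z = x"
    by (simp add: point_def vec_eq_iff z_coord)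
  have "solution z"
    unfolding solution_iff
  proof (intro conjI allI impI)
    show "z j = 0" if "num_vars \<le> j" for j
      using that by (simp add: z_def num_vars_def value_var_def)
    show "point z = (\<Sum>v<length vs. z (weight_var v) *\<^sub>R vs ! v)"
      using w(3) by (simp add: z_point z_weight)
    show "0 \<le> z (weight_var v)" if "v < length vs" for v
      using that w(1) by (simp add: z_weight)
    show "(\<Sum>v<length vs. z (weight_var v)) = 1"
      using w(2) by (simp add: z_weight)
    show "1 \<le> (\<Sum>l<length ps. z (select_var l))"
      using l0(1) by (simp add: z_select)
    show "z (select_var l) \<in> \<int>" if "l < length ps" for l
      using that by (simp add: z_select)
    show "z value_var + M * z (select_var l) \<le> fst (ps ! l) \<bullet> point z + snd (ps ! l) + M"
      if "l < length ps" for l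
      using that l0 gap[of "fst (ps ! l)" "snd (ps ! l)"] by (simp add: z_select z_value z_point)
  qed
  then show thesis
    using z_point z_value by (rule that)
qed

end

lemma milp_opt_value_SUP:
  assumes sound: "\<And>z. z \<in> milp_feasible N p A b I \<Longrightarrow> \<pi> z \<in> X \<and> milp_obj N c z \<le> F (\<pi> z)"
    and complete: "\<And>x. x \<in> X \<Longrightarrow> \<exists>z\<in>milp_feasible N p A b I. \<pi> z = x \<and> milp_obj N c z = F x"
    and max: "x0 \<in> X" "\<And>x. x \<in> X \<Longrightarrow> F x \<le> F x0"
  shows "milp_opt_value N p A b I c (SUP x\<in>X. F x)"
proof -
  have "(SUP x\<in>X. F x) = F x0"
    using max by (intro cSup_eq_maximum) auto
  moreover have "milp_obj N c z \<le> F x0" if "z \<in> milp_feasible N p A b I" for z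
    using sound[OF that] max(2) by (meson order_trans)
  ultimately show ?thesis
    unfolding milp_opt_value_def using complete[OF max(1)] by auto
qed

lemma milp_encoding_max_affine_on_polytope:
  fixes X :: "(real^'n) set"
  assumes "polytope X" "finite P" "P \<noteq> {}"
  obtains N p A b I c and e :: "'n \<Rightarrow> nat" where "I \<subseteq> {..<N}" "inj e" "\<forall>j. e j < N"
    "\<forall>z\<in>milp_feasible N p A b I. (\<chi> j. z (e j)) \<in> X \<and> milp_obj N c z \<le> max_affine P (\<chi> j. z (e j))"
    "\<forall>x\<in>X. \<exists>z\<in>milp_feasible N p A b I. (\<chi> j. z (e j)) = x \<and> milp_obj N c z = max_affine P x"
proof -
  obtain S where "finite S" and X: "X = convex hull S"
    using assms(1) unfolding polytope_def by blast
  obtain vs where vs: "set vs = S" "distinct vs"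
    using finite_distinct_list[OF \<open>finite S\<close>] by blast
  obtain ps where ps: "set ps = P"
    using finite_list[OF assms(2)] by blast
  obtain M where "M \<ge> 0" and gap: "\<And>x c \<beta>. x \<in> X \<Longrightarrow> (c, \<beta>) \<in> P \<Longrightarrow> max_affine P x - (c \<bullet> x + \<beta>) \<le> M"
    using max_affine_gap_bounded[OF compact_imp_bounded[OF polytope_imp_compact[OF assms(1)]] assms(2)]
    by blast
  obtain e :: "'n \<Rightarrow> nat" where e: "bij_betw e UNIV {..<CARD('n)}"
    using ex_bij_betw_finite_nat[of "UNIV :: 'n set"] by (auto simp: atLeast0LessThan)
  interpret max_affine_milp "CARD('n)" e vs ps M
    using e by unfold_locales
  obtain p A b where feasible: "milp_feasible num_vars p A b (select_var ` {..<length ps}) = Collect solution"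
    by (rule milp_feasible_eq_solution)
  have objective: "milp_obj num_vars (indicator {value_var}) z = z value_var" for z
    by simp
  show thesis
  proof (rule that[of "select_var ` {..<length ps}" num_vars e p A b "indicator {value_var}"])
    show "select_var ` {..<length ps} \<subseteq> {..<num_vars}" by auto
    show "inj e" using e by (simp add: bij_betw_def)
    show "\<forall>j. e j < num_vars" by simp
    show "\<forall>z\<in>milp_feasible num_vars p A b (select_var ` {..<length ps}).
            (\<chi> j. z (e j)) \<in> X \<and> milp_obj num_vars (indicator {value_var}) z \<le> max_affine P (\<chi> j. z (e j))"
      using solution_sound[OF \<open>M \<ge> 0\<close>] unfolding feasible objective X point_def vs(1) ps by blast
    show "\<forall>x\<in>X. \<exists>z\<in>milp_feasible num_vars p A b (select_var ` {..<length ps}).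
            (\<chi> j. z (e j)) = x \<and> milp_obj num_vars (indicator {value_var}) z = max_affine P x"
    proof
      fix x assume "x \<in> X"
      obtain z where "solution z" "point z = x" "z value_var = max_affine (set ps) x"
        by (rule solution_complete) (use vs ps assms(3) \<open>x \<in> X\<close> X gap in auto)
      then show "\<exists>z\<in>milp_feasible num_vars p A b (select_var ` {..<length ps}).
            (\<chi> j. z (e j)) = x \<and> milp_obj num_vars (indicator {value_var}) z = max_affine P x"
        unfolding feasible objective point_def ps by blast
    qed
  qed
qed

lemma milp_value_max_affine_on_polytope:
  fixes X :: "(real^'n) set" and F :: "real^'n \<Rightarrow> real"
  assumes X: "polytope X" "X \<noteq> {}" and P: "finite P" "P \<noteq> {}"
    and F: "\<And>x. x \<in> X \<Longrightarrow> F x = max_affine P x"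
  shows "(\<exists>x0\<in>X. F x0 = (SUP x\<in>X. F x)) \<and>
         (\<exists>N p A b I c e.
            I \<subseteq> {..<N} \<and> inj e \<and> (\<forall>j. e j < N) \<and>
            milp_opt_value N p A b I c (SUP x\<in>X. F x) \<and>
            (\<forall>z\<in>milp_feasible N p A b I. (\<chi> j. z (e j)) \<in> X \<and> milp_obj N c z \<le> F (\<chi> j. z (e j))) \<and>
            (\<forall>x\<in>X. \<exists>z\<in>milp_feasible N p A b I. (\<chi> j. z (e j)) = x \<and> milp_obj N c z = F x))"
proof -
  have "continuous_on X F"
    using continuous_on_max_affine[OF P] by (rule continuous_on_eq) (simp add: F)
  then obtain x0 where x0: "x0 \<in> X" "\<And>x. x \<in> X \<Longrightarrow> F x \<le> F x0"
    using continuous_attains_sup[OF polytope_imp_compact[OF X(1)] X(2)] by blast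
  then have "F x0 = (SUP x\<in>X. F x)"
    by (intro cSup_eq_maximum[symmetric]) auto
  moreover obtain N p A b I c e where milp: "I \<subseteq> {..<N}" "inj e" "\<forall>j. e j < N"
    "\<forall>z\<in>milp_feasible N p A b I. (\<chi> j. z (e j)) \<in> X \<and> milp_obj N c z \<le> max_affine P (\<chi> j. z (e j))"
    "\<forall>x\<in>X. \<exists>z\<in>milp_feasible N p A b I. (\<chi> j. z (e j)) = x \<and> milp_obj N c z = max_affine P x"
    by (rule milp_encoding_max_affine_on_polytope[OF X(1) P])
  moreover have sound: "\<forall>z\<in>milp_feasible N p A b I. (\<chi> j. z (e j)) \<in> X \<and> milp_obj N c z \<le> F (\<chi> j. z (e j))"
    using milp(4) F by simp
  moreover have complete: "\<forall>x\<in>X. \<exists>z\<in>milp_feasible N p A b I. (\<chi> j. z (e j)) = x \<and> milp_obj N c z = F x"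
    using milp(5) F by simp
  moreover have "milp_opt_value N p A b I c (SUP x\<in>X. F x)"
    using sound complete x0 by (intro milp_opt_value_SUP[where \<pi> = "\<lambda>z. \<chi> j. z (e j)"]) auto
  ultimately show ?thesis
    using x0(1) by blast
qed

theorem proposition1:
  fixes X :: "(real ^ 'n) set"
    and K :: "real ^ 'n \<Rightarrow> real ^ 'n ^ 'm"
    and \<alpha> :: normidx
  assumes "polytope X"
    and "X \<noteq> {}"
    and "\<exists>K0 L. linear L \<and> (\<forall>x\<in>X. K x = K0 + L x)"
  shows "(\<exists>x0\<in>X. opnorm \<alpha> (K x0) = (SUP x\<in>X. opnorm \<alpha> (K x))) \<and>
         (\<exists>N p A b I c e.
            I \<subseteq> {..<N} \<and> inj e \<and> (\<forall>j. e j < N) \<and>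
            milp_opt_value N p A b I c (SUP x\<in>X. opnorm \<alpha> (K x)) \<and>
            (\<forall>z\<in>milp_feasible N p A b I.
                (\<chi> j. z (e j)) \<in> X \<and> milp_obj N c z \<le> opnorm \<alpha> (K (\<chi> j. z (e j)))) \<and>
            (\<forall>x\<in>X. \<exists>z\<in>milp_feasible N p A b I.
                (\<chi> j. z (e j)) = x \<and> milp_obj N c z = opnorm \<alpha> (K x)))"
proof -
  obtain K0 L where K: "linear L" "\<And>x. x \<in> X \<Longrightarrow> K x = K0 + L x"
    using assms(3) by blast
  obtain P where "finite P" "P \<noteq> {}" "\<And>x. x \<in> X \<Longrightarrow> opnorm \<alpha> (K x) = max_affine P x"
    using opnorm_affine_eq_max_affine[where \<alpha> = \<alpha>, OF K] by blast
  then show ?thesis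
    using milp_value_max_affine_on_polytope[OF assms(1,2), of P "\<lambda>x. opnorm \<alpha> (K x)"] by blast
qed

end
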